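(* Let $A,B$ be Hermitian operators on a finite-dimensional Hilbert space $\mathbb{S}_1\oplus\mathbb{S}_2$ (with $\mathbb{S}_1,\mathbb{S}_2$ orthogonal and $\mathbb{S}_i$ also denoting the orthogonal projector onto it). Suppose $A$ is invertible, $A=\mathbb{S}_1A\mathbb{S}_1+\mathbb{S}_2A\mathbb{S}_2$, and for positive numbers $G_1,G_2$: $$\|\mathbb{S}_1A^{-1}\mathbb{S}_1\|<1/G_1,\quad \|\mathbb{S}_2A^{-1}\mathbb{S}_2\|<1/G_2,$$ $$b_{11}=\|\mathbb{S}_1B\mathbb{S}_1\|<G_1/2,\quad b_{22}=\|\mathbb{S}_2B\mathbb{S}_2\|<G_2/2,\quad b_{12}=\|\mathbb{S}_1B\mathbb{S}_2\|<\min(G_1,G_2)/2.$$ Then $A-B$ is invertible, and $$\|\mathbb{S}_1(A-B)^{-1}\mathbb{S}_2\|<\frac{b_{12}}{(G_1-b_{11})(G_2-b_{22})-b_{12}^2},$$ $$\|\mathbb{S}_1(A-B)^{-1}\mathbb{S}_1\|<\frac{1}{G_1-b_{11}}\big(1+b_{12}\|\mathbb{S}_1(A-B)^{-1}\mathbb{S}_2\|\big),$$ $$\|\mathbb{S}_2(A-B)^{-1}\mathbb{S}_2\|<\frac{1}{G_2-b_{22}}\big(1+b_{12}\|\mathbb{S}_1(A-B)^{-1}\mathbb{S}_2\|\big).$$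
   Context: $\|\cdot\|$ denotes the operator 2-norm. *)

theory Defs
  imports "HOL-Analysis.Analysis"
begin

text \<open>Finite-dimensional complex Hilbert space modelled as complex^'n with the
  Euclidean (l2) norm; operators are matrices complex^'n^'n.\<close>

definition adjoint_mat :: "complex^'n^'n \<Rightarrow> complex^'n^'n" where
  "adjoint_mat M = (\<chi> i j. cnj (M $ j $ i))"

definition hermitian :: "complex^'n^'n \<Rightarrow> bool" where
  "hermitian M \<longleftrightarrow> adjoint_mat M = M"

definition opnorm :: "complex^'n^'n \<Rightarrow> real" where
  "opnorm M = onorm (\<lambda>x. M *v x)"

definition orth_proj :: "complex^'n^'n \<Rightarrow> bool" where
  "orth_proj P \<longleftrightarrow> P ** P = P \<and> hermitian P"

end

theory Submission
  imports Defs
begin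

text \<open>
  Since \<open>A\<close> commutes with \<open>S\<^sub>i\<close>, the compression \<open>S\<^sub>i A\<^sup>-\<^sup>1 S\<^sub>i\<close> inverts \<open>A\<close> on the range
  of \<open>S\<^sub>i\<close>, so the hypothesis gives \<open>\<parallel>A S\<^sub>i x\<parallel> \<ge> g\<^sub>i \<parallel>S\<^sub>i x\<parallel>\<close> with some \<open>g\<^sub>i > G\<^sub>i\<close>.
  Projecting \<open>(A - B) x\<close> onto both blocks yields, with \<open>e\<^sub>i = g\<^sub>i - b\<^sub>i\<^sub>i\<close>, the coupled
  estimates \<open>e\<^sub>1 \<parallel>S\<^sub>1 x\<parallel> \<le> b\<^sub>1\<^sub>2 \<parallel>S\<^sub>2 x\<parallel> + \<parallel>S\<^sub>1 (A - B) x\<parallel>\<close> and its mirror image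
  (the \<open>S\<^sub>2 B S\<^sub>1\<close> block has norm \<open>b\<^sub>1\<^sub>2\<close> as the adjoint of \<open>S\<^sub>1 B S\<^sub>2\<close>).
  Eliminating one block gives \<open>(e\<^sub>1 e\<^sub>2 - b\<^sub>1\<^sub>2\<^sup>2) \<parallel>S\<^sub>1 x\<parallel> \<le> e\<^sub>2 \<parallel>S\<^sub>1 (A - B) x\<parallel> + b\<^sub>1\<^sub>2 \<parallel>S\<^sub>2 (A - B) x\<parallel>\<close>,
  hence injectivity of \<open>A - B\<close>, and applied to \<open>x = (A - B)\<^sup>-\<^sup>1 S\<^sub>2 y\<close> the off-diagonal bound.
  The diagonal bounds follow from a single estimate, using that the inverse is Hermitian, so
  \<open>\<parallel>S\<^sub>2 X S\<^sub>1\<parallel> = \<parallel>S\<^sub>1 X S\<^sub>2\<parallel>\<close>. Replacing \<open>e\<^sub>i\<close> by the smaller \<open>G\<^sub>i - b\<^sub>i\<^sub>i\<close> makes the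
  bounds strict.
\<close>

lemma norm_matrix_vector_le_opnorm: "norm (M *v x) \<le> opnorm M * norm x"
  unfolding opnorm_def by (rule onorm) simp

lemma opnorm_le: "(\<And>x. norm (M *v x) \<le> b * norm x) \<Longrightarrow> opnorm M \<le> b"
  unfolding opnorm_def by (rule onorm_le)

lemma opnorm_nonneg: "0 \<le> opnorm M"
  unfolding opnorm_def by (rule onorm_pos_le) simp

lemma matrix_diff_ldistrib: "A ** (B - C) = A ** B - A ** (C :: 'a::ring_1^'n^'m)"
  by (simp add: matrix_matrix_mult_def vec_eq_iff sum_subtractf algebra_simps)

lemma matrix_diff_rdistrib: "(A - B) ** C = A ** C - B ** (C :: 'a::ring_1^'n^'m)"
  by (simp add: matrix_matrix_mult_def vec_eq_iff sum_subtractf algebra_simps)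

lemma matrix_add_rdistrib: "(A + B) ** C = A ** C + B ** (C :: 'a::semiring_1^'n^'m)"
  by (simp add: matrix_matrix_mult_def vec_eq_iff sum.distrib algebra_simps)

lemma matrix_inv_right: "invertible M \<Longrightarrow> M ** matrix_inv M = mat 1"
  and matrix_inv_left: "invertible M \<Longrightarrow> matrix_inv M ** M = mat 1"
  unfolding invertible_def matrix_inv_def by (metis (mono_tags, lifting) someI_ex)+

lemma invertible_if_ker_trivial:
  fixes M :: "'a::field^'n^'n"
  shows "(\<And>x. M *v x = 0 \<Longrightarrow> x = 0) \<Longrightarrow> invertible M"
  using invertible_left_inverse matrix_left_invertible_ker by blast

lemma adjoint_mat_mult: "adjoint_mat (P ** Q) = adjoint_mat Q ** adjoint_mat P"
  by (simp add: vec_eq_iff adjoint_mat_def matrix_matrix_mult_def mult.commute)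

lemma adjoint_mat_diff: "adjoint_mat (P - Q) = adjoint_mat P - adjoint_mat Q"
  by (simp add: vec_eq_iff adjoint_mat_def)

lemma adjoint_mat_one: "adjoint_mat (mat 1) = mat 1"
  by (simp add: vec_eq_iff adjoint_mat_def mat_def)

lemma adjoint_mat_adjoint_mat: "adjoint_mat (adjoint_mat P) = P"
  by (simp add: vec_eq_iff adjoint_mat_def)

lemma inner_adjoint_mat: "inner (M *v x) y = inner x (adjoint_mat M *v y)"
proof -
  have inner_complex: "inner a b = Re (a * cnj b)" for a b :: complex
    by (simp add: inner_complex_def)
  have "(\<Sum>i\<in>UNIV. (\<Sum>j\<in>UNIV. M $ i $ j * x $ j) * cnj (y $ i))
      = (\<Sum>i\<in>UNIV. \<Sum>j\<in>UNIV. M $ i $ j * x $ j * cnj (y $ i))"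
    by (simp add: sum_distrib_right)
  also have "\<dots> = (\<Sum>j\<in>UNIV. \<Sum>i\<in>UNIV. M $ i $ j * x $ j * cnj (y $ i))"
    by (rule sum.swap)
  also have "\<dots> = (\<Sum>j\<in>UNIV. x $ j * cnj (\<Sum>i\<in>UNIV. cnj (M $ i $ j) * y $ i))"
    by (simp add: sum_distrib_left mult_ac)
  finally have "Re (\<Sum>i\<in>UNIV. (\<Sum>j\<in>UNIV. M $ i $ j * x $ j) * cnj (y $ i))
      = Re (\<Sum>j\<in>UNIV. x $ j * cnj (\<Sum>i\<in>UNIV. cnj (M $ i $ j) * y $ i))"
    by simp
  then show ?thesis
    by (simp add: inner_vec_def inner_complex matrix_vector_mult_def adjoint_mat_def Re_sum)
qed

lemma opnorm_adjoint_mat_le: "opnorm (adjoint_mat M) \<le> opnorm M"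
proof (rule opnorm_le)
  fix y
  let ?z = "adjoint_mat M *v y"
  have "norm ?z * norm ?z = inner ?z ?z"
    by (simp add: dot_square_norm power2_eq_square)
  also have "\<dots> = inner (M *v ?z) y"
    by (metis adjoint_mat_adjoint_mat inner_adjoint_mat inner_commute)
  also have "\<dots> \<le> norm (M *v ?z) * norm y"
    by (rule norm_cauchy_schwarz)
  also have "\<dots> \<le> (opnorm M * norm y) * norm ?z"
    using mult_right_mono[OF norm_matrix_vector_le_opnorm[of M ?z] norm_ge_zero[of y]]
    by (simp add: mult_ac)
  finally show "norm ?z \<le> opnorm M * norm y"
    by (cases "norm ?z = 0") (simp_all add: opnorm_nonneg mult_le_cancel_right)
qed

lemma opnorm_adjoint_mat: "opnorm (adjoint_mat M) = opnorm M"
  using opnorm_adjoint_mat_le[of M] opnorm_adjoint_mat_le[of "adjoint_mat M"]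
  by (simp add: adjoint_mat_adjoint_mat)

lemma adjoint_mat_hermitian_compression:
  assumes "hermitian P" "hermitian M" "hermitian Q"
  shows "adjoint_mat (P ** M ** Q) = Q ** M ** P"
  using assms by (simp add: hermitian_def adjoint_mat_mult matrix_mul_assoc)

lemma hermitian_diff: "hermitian A \<Longrightarrow> hermitian B \<Longrightarrow> hermitian (A - B)"
  by (simp add: hermitian_def adjoint_mat_diff)

lemma hermitian_matrix_inv:
  assumes "hermitian M" "invertible M"
  shows "hermitian (matrix_inv M)"
proof -
  let ?X = "matrix_inv M"
  have left_inverse: "adjoint_mat ?X ** M = mat 1"
    using arg_cong[OF matrix_inv_right[OF assms(2)], of adjoint_mat] assms(1)
    by (simp add: hermitian_def adjoint_mat_mult adjoint_mat_one)
  have "adjoint_mat ?X = adjoint_mat ?X ** (M ** ?X)"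
    by (simp add: matrix_inv_right[OF assms(2)])
  also have "\<dots> = ?X"
    by (simp add: matrix_mul_assoc left_inverse)
  finally show ?thesis
    by (simp add: hermitian_def)
qed

lemma orth_proj_complement:
  assumes "orth_proj P"
  shows "orth_proj (mat 1 - P)"
  using assms
  by (simp add: orth_proj_def hermitian_def adjoint_mat_diff adjoint_mat_one
      matrix_diff_ldistrib matrix_diff_rdistrib)

lemma idempotent_mult_complement:
  fixes P :: "'a::ring_1^'n^'n"
  assumes "P ** P = P"
  shows "P ** (mat 1 - P) = 0" "(mat 1 - P) ** P = 0"
  using assms by (simp_all add: matrix_diff_ldistrib matrix_diff_rdistrib)

lemma norm_orth_proj_le:
  assumes "orth_proj P"
  shows "norm (P *v x) \<le> norm x"
proof -
  let ?z = "P *v x"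
  have "norm ?z * norm ?z = inner ?z ?z"
    by (simp add: dot_square_norm power2_eq_square)
  also have "\<dots> = inner x (P *v ?z)"
    using assms by (simp add: orth_proj_def hermitian_def inner_adjoint_mat)
  also have "\<dots> = inner x ?z"
    using assms by (simp add: orth_proj_def matrix_vector_mul_assoc)
  also have "\<dots> \<le> norm x * norm ?z"
    by (rule norm_cauchy_schwarz)
  finally show ?thesis
    by (cases "norm ?z = 0") (simp_all add: mult_le_cancel_right)
qed

lemma commute_if_block_diagonal:
  fixes A P :: "'a::ring_1^'n^'n"
  assumes "P ** P = P" "A = P ** A ** P + (mat 1 - P) ** A ** (mat 1 - P)"
  shows "P ** A = A ** P"
proof -
  have "P ** A = P ** A ** P"
    by (subst assms(2)) (simp add: matrix_add_ldistrib matrix_mul_assoc assms(1)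
        idempotent_mult_complement[OF assms(1)])
  also have "\<dots> = A ** P"
    by (subst (2) assms(2)) (simp add: matrix_add_rdistrib flip: matrix_mul_assoc,
        simp add: matrix_mul_assoc assms(1) idempotent_mult_complement[OF assms(1)])
  finally show ?thesis .
qed

lemma compression_lower_bound:
  fixes A P :: "complex^'n^'n"
  assumes "invertible A" "P ** P = P" "P ** A = A ** P" "G > 0"
    and "opnorm (P ** matrix_inv A ** P) < 1 / G"
  obtains g where "g > G" "\<And>x. g * norm (P *v x) \<le> norm (A *v (P *v x))"
proof -
  let ?c = "opnorm (P ** matrix_inv A ** P)"
  have "(P ** matrix_inv A ** P) ** (A ** P) = P ** (matrix_inv A ** (P ** A)) ** P"
    by (simp add: matrix_mul_assoc)
  also have "\<dots> = P"
    using assms(2,3) by (simp add: matrix_mul_assoc matrix_inv_left[OF assms(1)])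
  finally have bound: "norm (P *v x) \<le> ?c * norm (A *v (P *v x))" for x
    using norm_matrix_vector_le_opnorm[of "P ** matrix_inv A ** P" "A *v (P *v x)"]
    by (simp add: matrix_vector_mul_assoc)
  show ?thesis
  proof (cases "?c = 0")
    case True
    then show ?thesis
      using bound by (intro that[of "G + 1"]) auto
  next
    case False
    then have "?c > 0"
      using opnorm_nonneg[of "P ** matrix_inv A ** P"] by linarith
    then show ?thesis
      using assms(4,5) bound by (intro that[of "1 / ?c"]) (auto simp: field_simps)
  qed
qed

lemma block_row_lower_bound:
  fixes A B P :: "complex^'n^'n"
  assumes "invertible A" "P ** P = P" "P ** A = A ** P" "G > 0"
    and "opnorm (P ** matrix_inv A ** P) < 1 / G"
  obtains e where "e > G - opnorm (P ** B ** P)"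
    "\<And>x. e * norm (P *v x)
      \<le> opnorm (P ** B ** (mat 1 - P)) * norm ((mat 1 - P) *v x) + norm (P *v ((A - B) *v x))"
proof -
  let ?Q = "mat 1 - P"
  obtain g where g: "g > G" "\<And>x. g * norm (P *v x) \<le> norm (A *v (P *v x))"
    using compression_lower_bound[OF assms] by blast
  have "A ** P = P ** (A - B) + P ** B ** (P + ?Q)"
    by (simp add: matrix_diff_ldistrib assms(3))
  also have "\<dots> = P ** (A - B) + (P ** B ** P) ** P + (P ** B ** ?Q) ** ?Q"
    using idempotent_mult_complement[OF assms(2)]
    by (simp add: matrix_add_ldistrib matrix_diff_ldistrib matrix_diff_rdistrib assms(2)
        add.assoc flip: matrix_mul_assoc)
  finally have split: "A *v (P *v x)
      = P *v ((A - B) *v x) + (P ** B ** P) *v (P *v x) + (P ** B ** ?Q) *v (?Q *v x)" for x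
    unfolding matrix_vector_mul_assoc by (simp only: matrix_vector_mult_add_rdistrib)
  show ?thesis
  proof (rule that)
    show "g - opnorm (P ** B ** P) > G - opnorm (P ** B ** P)"
      using g(1) by simp
    fix x
    have "g * norm (P *v x) \<le> norm (A *v (P *v x))"
      by (rule g(2))
    also have "\<dots> \<le> norm (P *v ((A - B) *v x)) + norm ((P ** B ** P) *v (P *v x))
        + norm ((P ** B ** ?Q) *v (?Q *v x))"
      unfolding split by (intro norm_triangle_le add_mono order_refl norm_triangle_ineq)
    also have "\<dots> \<le> norm (P *v ((A - B) *v x)) + opnorm (P ** B ** P) * norm (P *v x)
        + opnorm (P ** B ** ?Q) * norm (?Q *v x)"
      by (intro add_mono norm_matrix_vector_le_opnorm order_refl)
    finally show "(g - opnorm (P ** B ** P)) * norm (P *v x)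
        \<le> opnorm (P ** B ** ?Q) * norm (?Q *v x) + norm (P *v ((A - B) *v x))"
      by (simp add: algebra_simps)
  qed
qed

lemma block_elimination:
  fixes e1 e2 b a1 a2 u w :: real
  assumes "e2 > 0" "b \<ge> 0" "e1 * a1 \<le> b * a2 + u" "e2 * a2 \<le> b * a1 + w"
  shows "(e1 * e2 - b^2) * a1 \<le> e2 * u + b * w"
proof -
  have "e2 * (e1 * a1) \<le> e2 * (b * a2 + u)" "b * (e2 * a2) \<le> b * (b * a1 + w)"
    using assms by (simp_all add: mult_left_mono)
  then show ?thesis
    by (simp add: algebra_simps power2_eq_square)
qed

lemma invertible_if_block_dominant:
  fixes M P Q :: "complex^'n^'n"
  assumes "P + Q = mat 1" "e1 > 0" "e2 > 0" "b \<ge> 0" "b^2 < e1 * e2"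
    and row1: "\<And>x. e1 * norm (P *v x) \<le> b * norm (Q *v x) + norm (P *v (M *v x))"
    and row2: "\<And>x. e2 * norm (Q *v x) \<le> b * norm (P *v x) + norm (Q *v (M *v x))"
  shows "invertible M"
proof (rule invertible_if_ker_trivial)
  fix x assume "M *v x = 0"
  then have "(e1 * e2 - b^2) * norm (P *v x) \<le> 0" "(e2 * e1 - b^2) * norm (Q *v x) \<le> 0"
    using block_elimination[OF assms(3,4) row1 row2, of x]
      block_elimination[OF assms(2,4) row2 row1, of x] by simp_all
  then have "P *v x = 0" "Q *v x = 0"
    using assms(5) by (simp_all add: mult_le_0_iff mult.commute)
  then show "x = 0"
    using arg_cong[OF assms(1), of "\<lambda>N. N *v x"] by (simp add: matrix_vector_mult_add_rdistrib)
qed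

lemma opnorm_inverse_offdiag_block_le:
  fixes M P Q :: "complex^'n^'n"
  assumes "invertible M" "orth_proj Q" "P ** Q = 0" "e2 > 0" "b \<ge> 0" "b^2 < e1 * e2"
    and row1: "\<And>x. e1 * norm (P *v x) \<le> b * norm (Q *v x) + norm (P *v (M *v x))"
    and row2: "\<And>x. e2 * norm (Q *v x) \<le> b * norm (P *v x) + norm (Q *v (M *v x))"
  shows "opnorm (P ** matrix_inv M ** Q) \<le> b / (e1 * e2 - b^2)"
proof (rule opnorm_le)
  fix y
  define x where "x = matrix_inv M *v (Q *v y)"
  have "M *v x = Q *v y"
    by (simp add: x_def matrix_vector_mul_assoc matrix_mul_assoc matrix_inv_right[OF assms(1)])
  then have "P *v (M *v x) = 0" "Q *v (M *v x) = Q *v y"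
    using assms(2,3) by (simp_all add: matrix_vector_mul_assoc orth_proj_def)
  moreover have "norm (Q *v y) \<le> norm y"
    using assms(2) by (rule norm_orth_proj_le)
  ultimately have "e1 * norm (P *v x) \<le> b * norm (Q *v x) + 0"
    and "e2 * norm (Q *v x) \<le> b * norm (P *v x) + norm y"
    using row1[of x] row2[of x] by simp_all
  from block_elimination[OF assms(4,5) this]
  have "norm (P *v x) \<le> b * norm y / (e1 * e2 - b^2)"
    using assms(6) by (simp add: pos_le_divide_eq mult.commute)
  moreover have "(P ** matrix_inv M ** Q) *v y = P *v x"
    by (simp add: x_def matrix_vector_mul_assoc matrix_mul_assoc)
  ultimately show "norm ((P ** matrix_inv M ** Q) *v y) \<le> b / (e1 * e2 - b^2) * norm y"
    by simp
qed

lemma opnorm_inverse_diag_block_le: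
  fixes M P Q :: "complex^'n^'n"
  assumes "invertible M" "orth_proj P" "e > 0" "b \<ge> 0"
    and row: "\<And>x. e * norm (P *v x) \<le> b * norm (Q *v x) + norm (P *v (M *v x))"
  shows "opnorm (P ** matrix_inv M ** P) \<le> (1 + b * opnorm (Q ** matrix_inv M ** P)) / e"
proof (rule opnorm_le)
  fix y
  let ?X = "matrix_inv M"
  have "e * norm ((P ** ?X ** P) *v y) \<le> b * norm ((Q ** ?X ** P) *v y) + norm (P *v y)"
    using row[of "?X *v (P *v y)"] assms(2)
    by (simp add: matrix_vector_mul_assoc matrix_mul_assoc matrix_inv_right[OF assms(1)]
        orth_proj_def)
  also have "\<dots> \<le> b * (opnorm (Q ** ?X ** P) * norm y) + norm y"
    using assms(4) norm_orth_proj_le[OF assms(2)]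
    by (intro add_mono mult_left_mono norm_matrix_vector_le_opnorm)
  finally show "norm ((P ** ?X ** P) *v y) \<le> (1 + b * opnorm (Q ** ?X ** P)) / e * norm y"
    using assms(3) by (simp add: field_simps)
qed

lemma block_dominant_inverse_bounds:
  fixes M S1 S2 :: "complex^'n^'n"
  assumes "hermitian M" "orth_proj S1" "S2 = mat 1 - S1"
    and "e1 > 0" "e2 > 0" "b \<ge> 0" "b^2 < e1 * e2"
    and row1: "\<And>x. e1 * norm (S1 *v x) \<le> b * norm (S2 *v x) + norm (S1 *v (M *v x))"
    and row2: "\<And>x. e2 * norm (S2 *v x) \<le> b * norm (S1 *v x) + norm (S2 *v (M *v x))"
  shows "invertible M"
    and "opnorm (S1 ** matrix_inv M ** S2) \<le> b / (e1 * e2 - b^2)"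
    and "opnorm (S1 ** matrix_inv M ** S1) \<le> (1 + b * opnorm (S1 ** matrix_inv M ** S2)) / e1"
    and "opnorm (S2 ** matrix_inv M ** S2) \<le> (1 + b * opnorm (S1 ** matrix_inv M ** S2)) / e2"
proof -
  have S2: "orth_proj S2"
    using assms(2,3) orth_proj_complement by simp
  have herm: "hermitian S1" "hermitian S2"
    using assms(2) S2 by (simp_all add: orth_proj_def)
  have "S1 ** S2 = 0"
    using assms(2,3) idempotent_mult_complement(1)[of S1] by (simp add: orth_proj_def)
  show inv: "invertible M"
    using invertible_if_block_dominant[OF _ assms(4-7) row1 row2] assms(3) by simp
  show "opnorm (S1 ** matrix_inv M ** S2) \<le> b / (e1 * e2 - b^2)"
    by (rule opnorm_inverse_offdiag_block_le[OF inv S2 \<open>S1 ** S2 = 0\<close> assms(5-7) row1 row2])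
  have "hermitian (matrix_inv M)"
    using assms(1) inv by (rule hermitian_matrix_inv)
  then have "opnorm (S2 ** matrix_inv M ** S1) = opnorm (S1 ** matrix_inv M ** S2)"
    by (metis adjoint_mat_hermitian_compression herm opnorm_adjoint_mat)
  then show "opnorm (S1 ** matrix_inv M ** S1) \<le> (1 + b * opnorm (S1 ** matrix_inv M ** S2)) / e1"
    using opnorm_inverse_diag_block_le[OF inv assms(2,4,6) row1] by simp
  show "opnorm (S2 ** matrix_inv M ** S2) \<le> (1 + b * opnorm (S1 ** matrix_inv M ** S2)) / e2"
    by (rule opnorm_inverse_diag_block_le[OF inv S2 assms(5,6) row2])
qed

lemma block_diagonal_perturbation_row_bounds:
  fixes A B S1 S2 :: "complex^'n^'n"
  assumes "hermitian B" "orth_proj S1" "S2 = mat 1 - S1" "invertible A"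
    and "A = S1 ** A ** S1 + S2 ** A ** S2" "G1 > 0" "G2 > 0"
    and "opnorm (S1 ** matrix_inv A ** S1) < 1 / G1"
    and "opnorm (S2 ** matrix_inv A ** S2) < 1 / G2"
  obtains e1 e2 where "e1 > G1 - opnorm (S1 ** B ** S1)" "e2 > G2 - opnorm (S2 ** B ** S2)"
    and "\<And>x. e1 * norm (S1 *v x)
      \<le> opnorm (S1 ** B ** S2) * norm (S2 *v x) + norm (S1 *v ((A - B) *v x))"
    and "\<And>x. e2 * norm (S2 *v x)
      \<le> opnorm (S1 ** B ** S2) * norm (S1 *v x) + norm (S2 *v ((A - B) *v x))"
proof -
  have S2: "orth_proj S2" "mat 1 - S2 = S1"
    using assms(2,3) orth_proj_complement by auto
  have idem: "S1 ** S1 = S1" "S2 ** S2 = S2" and herm: "hermitian S1" "hermitian S2"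
    using assms(2) S2(1) by (auto simp: orth_proj_def)
  have "S1 ** A = A ** S1"
    using commute_if_block_diagonal[OF idem(1)] assms(3,5) by blast
  then obtain e1 where "e1 > G1 - opnorm (S1 ** B ** S1)"
    and "\<And>x. e1 * norm (S1 *v x)
      \<le> opnorm (S1 ** B ** S2) * norm (S2 *v x) + norm (S1 *v ((A - B) *v x))"
    using block_row_lower_bound[OF assms(4) idem(1) _ assms(6,8), of B]
    unfolding assms(3)[symmetric] by blast
  moreover have "S2 ** A = A ** S2"
    using commute_if_block_diagonal[OF idem(2)] assms(5) S2(2) by (simp add: add.commute)
  moreover have "opnorm (S2 ** B ** S1) = opnorm (S1 ** B ** S2)"
    by (metis adjoint_mat_hermitian_compression[OF herm(1) assms(1) herm(2)] opnorm_adjoint_mat)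
  ultimately show ?thesis
    using block_row_lower_bound[OF assms(4) idem(2) _ assms(7,9), of B] that
    unfolding S2(2) by metis
qed

lemma block_bounds_shrink_gaps:
  fixes g1 g2 e1 e2 b t d1 d2 :: real
  assumes "0 < g1" "g1 < e1" "0 < g2" "g2 < e2" "0 \<le> b" "b^2 < g1 * g2" "0 \<le> t"
    and "t \<le> b / (e1 * e2 - b^2)" "d1 \<le> (1 + b * t) / e1" "d2 \<le> (1 + b * t) / e2"
  shows "t \<le> b / (g1 * g2 - b^2)" "b > 0 \<Longrightarrow> t < b / (g1 * g2 - b^2)"
    and "d1 < 1 / g1 * (1 + b * t)" "d2 < 1 / g2 * (1 + b * t)"
proof -
  have "g1 * g2 < e1 * e2"
    using assms(1-4) by (intro mult_strict_mono) auto
  then have "b / (e1 * e2 - b^2) \<le> b / (g1 * g2 - b^2)"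
    "b > 0 \<Longrightarrow> b / (e1 * e2 - b^2) < b / (g1 * g2 - b^2)"
    using assms(5,6) by (auto intro: divide_left_mono divide_strict_left_mono)
  then show "t \<le> b / (g1 * g2 - b^2)" "b > 0 \<Longrightarrow> t < b / (g1 * g2 - b^2)"
    using assms(8) by auto
  have "0 < 1 + b * t"
    using assms(5,7) by (simp add: add_pos_nonneg)
  then have "(1 + b * t) / e1 < 1 / g1 * (1 + b * t)" "(1 + b * t) / e2 < 1 / g2 * (1 + b * t)"
    using assms(1-4) by (simp_all add: divide_strict_left_mono)
  then show "d1 < 1 / g1 * (1 + b * t)" "d2 < 1 / g2 * (1 + b * t)"
    using assms(9,10) by simp_all
qed

theorem lemma3:
  fixes A B S1 S2 :: "complex^'n^'n" and G1 G2 :: real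
  assumes "hermitian A" and "hermitian B"
    and "orth_proj S1" and "S2 = mat 1 - S1"
    and "invertible A"
    and "A = S1 ** A ** S1 + S2 ** A ** S2"
    and "G1 > 0" and "G2 > 0"
    and "opnorm (S1 ** matrix_inv A ** S1) < 1 / G1"
    and "opnorm (S2 ** matrix_inv A ** S2) < 1 / G2"
    and "opnorm (S1 ** B ** S1) < G1 / 2"
    and "opnorm (S2 ** B ** S2) < G2 / 2"
    and "opnorm (S1 ** B ** S2) < min G1 G2 / 2"
  shows "let b11 = opnorm (S1 ** B ** S1); b22 = opnorm (S2 ** B ** S2);
             b12 = opnorm (S1 ** B ** S2); X = matrix_inv (A - B) in
         invertible (A - B)
       \<and> opnorm (S1 ** X ** S2) \<le> b12 / ((G1 - b11) * (G2 - b22) - b12^2)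
       \<and> (b12 > 0 \<longrightarrow> opnorm (S1 ** X ** S2) < b12 / ((G1 - b11) * (G2 - b22) - b12^2))
       \<and> opnorm (S1 ** X ** S1) < 1 / (G1 - b11) * (1 + b12 * opnorm (S1 ** X ** S2))
       \<and> opnorm (S2 ** X ** S2) < 1 / (G2 - b22) * (1 + b12 * opnorm (S1 ** X ** S2))"
proof -
  let ?b11 = "opnorm (S1 ** B ** S1)" and ?b22 = "opnorm (S2 ** B ** S2)"
    and ?b12 = "opnorm (S1 ** B ** S2)"
  obtain e1 e2 where e: "e1 > G1 - ?b11" "e2 > G2 - ?b22"
    and rows: "\<And>x. e1 * norm (S1 *v x) \<le> ?b12 * norm (S2 *v x) + norm (S1 *v ((A - B) *v x))"
      "\<And>x. e2 * norm (S2 *v x) \<le> ?b12 * norm (S1 *v x) + norm (S2 *v ((A - B) *v x))"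
    using block_diagonal_perturbation_row_bounds[OF assms(2-10)] by blast
  have gaps: "0 < G1 - ?b11" "0 < G2 - ?b22" and b12: "0 \<le> ?b12" "?b12 < G1 / 2" "?b12 < G2 / 2"
    using assms(7,8,11-13) opnorm_nonneg by auto
  have "?b12^2 < (G1 / 2) * (G2 / 2)"
    unfolding power2_eq_square using b12 by (intro mult_strict_mono) auto
  also have "\<dots> < (G1 - ?b11) * (G2 - ?b22)"
    using assms(7,8,11,12) by (intro mult_strict_mono) auto
  finally have coupling: "?b12^2 < (G1 - ?b11) * (G2 - ?b22)" .
  also have "\<dots> < e1 * e2"
    using e gaps by (intro mult_strict_mono) auto
  finally have dominant: "?b12^2 < e1 * e2" .
  have e_pos: "0 < e1" "0 < e2"
    using e gaps by auto
  note bounds = block_dominant_inverse_bounds[OF hermitian_diff[OF assms(1,2)] assms(3,4)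
      e_pos b12(1) dominant rows]
  show ?thesis
    unfolding Let_def
    using block_bounds_shrink_gaps[OF gaps(1) e(1) gaps(2) e(2) b12(1) coupling opnorm_nonneg
        bounds(2-4)] bounds(1) by simp
qed

end
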